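(* For every integer $k\ge7$, $c_{n_k^*}\ge\frac14+\frac{1}{8(n_k^* )^{2/3}-4}$, where $$n_k^*=2k+2\sum_{i=1}^{\lfloor\sqrt{k/2}\rfloor}\left(2\left\lfloor\frac{2k-2i^2-i}{2}\right\rfloor+i\right).$$
   Context: A weighted digraph $D=(V,A,w)$ is a digraph without loops or parallel arcs (opposite arcs allowed) with weights $w:A\to\mathbb{R}_{\ge0}$; $w(D)$ is the total arc weight. For a partition $(X,Y)$ of $V$, $w(X,Y)$ is the total weight of arcs from $X$ to $Y$, and $\mathrm{mac}(D)=\max_{(X,Y)}w(X,Y)$. For an integer $\nu\ge1$, $c_\nu$ is the supremum of reals $c\ge0$ such that every acyclic weighted digraph $D$ whose longest directed path has exactly $\nu$ vertices satisfies $\mathrm{mac}(D)\ge c\cdot w(D)$. *)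

theory Defs
  imports Complex_Main
begin

text \<open>No loops; parallel arcs are excluded
automatically since A is a set of ordered pairs; opposite arcs are allowed.\<close>

definition weighted_digraph :: "nat set \<Rightarrow> (nat \<times> nat) set \<Rightarrow> (nat \<times> nat \<Rightarrow> real) \<Rightarrow> bool" where
  "weighted_digraph V A w \<longleftrightarrow> finite V \<and> A \<subseteq> V \<times> V \<and> (\<forall>x. (x, x) \<notin> A)
     \<and> (\<forall>a\<in>A. w a \<ge> 0)"

definition total_weight :: "(nat \<times> nat) set \<Rightarrow> (nat \<times> nat \<Rightarrow> real) \<Rightarrow> real" where
  "total_weight A w = (\<Sum>a\<in>A. w a)"

definition cut_weight :: "(nat \<times> nat) set \<Rightarrow> (nat \<times> nat \<Rightarrow> real) \<Rightarrow> nat set \<Rightarrow> nat set \<Rightarrow> real" where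
  "cut_weight A w X Y = (\<Sum>a\<in>A \<inter> (X \<times> Y). w a)"

definition mac :: "nat set \<Rightarrow> (nat \<times> nat) set \<Rightarrow> (nat \<times> nat \<Rightarrow> real) \<Rightarrow> real" where
  "mac V A w = Max ((\<lambda>X. cut_weight A w X (V - X)) ` Pow V)"

definition is_dipath :: "nat set \<Rightarrow> (nat \<times> nat) set \<Rightarrow> nat list \<Rightarrow> bool" where
  "is_dipath V A p \<longleftrightarrow> p \<noteq> [] \<and> set p \<subseteq> V \<and> distinct p
     \<and> (\<forall>i. Suc i < length p \<longrightarrow> (p ! i, p ! Suc i) \<in> A)"

definition longest_path_has :: "nat set \<Rightarrow> (nat \<times> nat) set \<Rightarrow> nat \<Rightarrow> bool" where
  "longest_path_has V A \<nu> \<longleftrightarrow> (\<exists>p. is_dipath V A p \<and> length p = \<nu>)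
     \<and> (\<forall>p. is_dipath V A p \<longrightarrow> length p \<le> \<nu>)"

definition c_const :: "nat \<Rightarrow> real" where
  "c_const \<nu> = Sup {c. c \<ge> 0 \<and> (\<forall>V A w. weighted_digraph V A w \<and> acyclic A
      \<and> longest_path_has V A \<nu> \<longrightarrow> mac V A w \<ge> c * total_weight A w)}"

definition nstar :: "nat \<Rightarrow> nat" where
  "nstar k = nat (2 * int k + 2 * (\<Sum>i = 1..nat \<lfloor>sqrt (real k / 2)\<rfloor>.
       2 * ((2 * int k - 2 * int i ^ 2 - int i) div 2) + int i))"

end

theory Submission
  imports Defs "HOL-Library.FuncSet"
begin

(*
  Give every vertex its height, the number of vertices of a longest directed path ending in it.
  Arcs strictly increase heights, which lie in 1..nu, so every set L of levels yields the cut
  (X, V - X) with X the vertices whose level is in L.  If a random L separates every pair of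
  levels i < j (i in L, j not in L) with probability at least c, averaging gives mac >= c * w(D).

  For nu = n*_k cut the levels into consecutive blocks of sizes b_s, ..., b_1, 2k, b_1, ..., b_s,
  where s = floor (sqrt (k/2)) and b_i = 2k - 2i^2 - (i mod 2), and pick in each block, independently
  and uniformly, a subset of size (b_i + i)/2 on the left, k in the middle and (b_i - i)/2 on the
  right.  Counting subsets, every pair of levels is then separated with probability at least
  k / (2(2k - 1)) = 1/4 + 1/(8k - 4), and k^3 <= (n*_k)^2 turns this into the stated bound.
*)

lemma is_dipath_nth_trancl:
  assumes "is_dipath V A p" "i < j" "j < length p"
  shows "(p!i, p!j) \<in> A\<^sup>+"
  using assms(2,3)
proof (induction j)
  case 0 then show ?case by simp
next
  case (Suc j)
  have arc: "(p!j, p!Suc j) \<in> A" using assms(1) Suc.prems unfolding is_dipath_def by blast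
  show ?case
  proof (cases "i = j")
    case True then show ?thesis using arc by auto
  next
    case False
    then have "(p!i, p!j) \<in> A\<^sup>+" using Suc by auto
    then show ?thesis using arc by (meson trancl_into_trancl)
  qed
qed

lemma is_dipath_snoc:
  assumes p: "is_dipath V A p" and ac: "acyclic A" and arc: "(last p, v) \<in> A" and "v \<in> V"
  shows "is_dipath V A (p @ [v])"
proof -
  have "p \<noteq> []" using p unfolding is_dipath_def by auto
  then have last_nth: "last p = p ! (length p - 1)" by (simp add: last_conv_nth)
  have "v \<notin> set p"
  proof
    assume "v \<in> set p"
    then obtain i where i: "i < length p" "p ! i = v" by (auto simp: in_set_conv_nth)
    have "(v, last p) \<in> A\<^sup>*"
    proof (cases "i = length p - 1")
      case False
      then have "i < length p - 1" using i by linarith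
      then have "(p!i, p!(length p - 1)) \<in> A\<^sup>+" using is_dipath_nth_trancl[OF p, of i "length p - 1"] i by simp
      then show ?thesis using i last_nth by simp
    qed (use i last_nth in simp)
    then have "(v, v) \<in> A\<^sup>+" using arc by (meson rtrancl_into_trancl1)
    then show False using ac unfolding acyclic_def by blast
  qed
  moreover have "((p @ [v]) ! i, (p @ [v]) ! Suc i) \<in> A" if "Suc i < length (p @ [v])" for i
  proof (cases "Suc i < length p")
    case True then show ?thesis using p unfolding is_dipath_def by (simp add: nth_append)
  next
    case False
    then have "i = length p - 1" "Suc i = length p" using that by auto
    then show ?thesis using arc last_nth by (simp add: nth_append)
  qed
  ultimately show ?thesis using p \<open>v \<in> V\<close> unfolding is_dipath_def by auto
qed

definition height :: "nat set \<Rightarrow> (nat \<times> nat) set \<Rightarrow> nat \<Rightarrow> nat" where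
  "height V A v = Max {length p |p. is_dipath V A p \<and> last p = v}"

context
  fixes V A N v
  assumes bounded: "\<And>p. is_dipath V A p \<Longrightarrow> length p \<le> N" and v: "v \<in> V"
begin

private lemma finite_dipath_lengths: "finite {length p |p. is_dipath V A p \<and> last p = v}"
  by (rule finite_subset[of _ "{..N}"]) (auto dest: bounded)

private lemma singleton_dipath: "is_dipath V A [v]"
  using v by (simp add: is_dipath_def)

lemma length_le_height: "is_dipath V A p \<Longrightarrow> last p = v \<Longrightarrow> length p \<le> height V A v"
  unfolding height_def by (rule Max_ge[OF finite_dipath_lengths]) blast

lemma height_attained: "\<exists>p. is_dipath V A p \<and> last p = v \<and> length p = height V A v"
proof -
  have "height V A v \<in> {length p |p. is_dipath V A p \<and> last p = v}"
    unfolding height_def by (rule Max_in[OF finite_dipath_lengths]) (use singleton_dipath in auto)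
  then show ?thesis by auto
qed

lemma height_bounds: "1 \<le> height V A v" "height V A v \<le> N"
proof -
  show "1 \<le> height V A v" using length_le_height[OF singleton_dipath] by simp
  obtain p where "is_dipath V A p" "length p = height V A v" using height_attained by blast
  then show "height V A v \<le> N" using bounded[of p] by simp
qed

end

lemma height_less_arc:
  assumes wd: "weighted_digraph V A w" and ac: "acyclic A"
    and bounded: "\<And>p. is_dipath V A p \<Longrightarrow> length p \<le> N" and arc: "(u, v) \<in> A"
  shows "height V A u < height V A v"
proof -
  have uv: "u \<in> V" "v \<in> V" using wd arc unfolding weighted_digraph_def by auto
  obtain p where p: "is_dipath V A p" "last p = u" "length p = height V A u"
    using height_attained[of V A N u, OF bounded uv(1)] by blast
  have "is_dipath V A (p @ [v])" using is_dipath_snoc[OF p(1) ac _ uv(2)] arc p(2) by simp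
  then show ?thesis using length_le_height[of V A N v "p @ [v]", OF bounded uv(2)] p(3) by simp
qed

lemma cut_weight_le_mac:
  assumes "weighted_digraph V A w" "X \<subseteq> V"
  shows "cut_weight A w X (V - X) \<le> mac V A w"
  unfolding mac_def using assms by (intro Max_ge) (auto simp: weighted_digraph_def)

lemma mac_le_total_weight:
  assumes wd: "weighted_digraph V A w"
  shows "mac V A w \<le> total_weight A w"
proof -
  have finV: "finite V" and AV: "A \<subseteq> V \<times> V" and nonneg: "\<And>a. a \<in> A \<Longrightarrow> w a \<ge> 0"
    using wd unfolding weighted_digraph_def by auto
  have "cut_weight A w X (V - X) \<le> total_weight A w" for X
    unfolding cut_weight_def total_weight_def
    by (rule sum_mono2) (use finite_subset[OF AV] finV nonneg in auto)
  then show ?thesis unfolding mac_def using finV by (auto intro!: Max.boundedI)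
qed

lemma mac_ge_by_averaging:
  fixes F :: "'f set" and X :: "'f \<Rightarrow> nat set" and c :: real
  assumes wd: "weighted_digraph V A w" and F: "finite F" "F \<noteq> {}"
    and X: "\<And>f. X f \<subseteq> V"
    and cut: "\<And>u v. (u, v) \<in> A \<Longrightarrow> c * card F \<le> card {f\<in>F. u \<in> X f \<and> v \<notin> X f}"
  shows "c * total_weight A w \<le> mac V A w"
proof -
  have AV: "A \<subseteq> V \<times> V" and finA: "finite A" and nonneg: "\<And>a. a \<in> A \<Longrightarrow> w a \<ge> 0"
    using wd finite_subset unfolding weighted_digraph_def by (auto intro: finite_cartesian_product)
  define cuts where "cuts a = {f\<in>F. fst a \<in> X f \<and> snd a \<notin> X f}" for a
  have "card F * (c * total_weight A w) = (\<Sum>a\<in>A. w a * (c * card F))"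
    unfolding total_weight_def by (simp add: sum_distrib_left sum_distrib_right mult_ac)
  also have "\<dots> \<le> (\<Sum>a\<in>A. w a * card (cuts a))"
    using cut nonneg unfolding cuts_def by (intro sum_mono mult_left_mono) auto
  also have "\<dots> = (\<Sum>a\<in>A. \<Sum>f\<in>F. if fst a \<in> X f \<and> snd a \<notin> X f then w a else 0)"
    unfolding cuts_def using F(1) by (simp add: sum.If_cases Int_def mult.commute)
  also have "\<dots> = (\<Sum>f\<in>F. \<Sum>a\<in>A. if fst a \<in> X f \<and> snd a \<notin> X f then w a else 0)"
    by (rule sum.swap)
  also have "\<dots> = (\<Sum>f\<in>F. cut_weight A w (X f) (V - X f))"
    unfolding cut_weight_def sum.inter_restrict[OF finA] using AV
    by (intro sum.cong refl) auto
  also have "\<dots> \<le> card F * mac V A w"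
    using sum_mono[of F _ "\<lambda>_. mac V A w", OF cut_weight_le_mac[OF wd X]] by simp
  finally show ?thesis using F by (simp add: card_gt_0_iff)
qed

lemma mac_ge_by_level_averaging:
  fixes F :: "'f set" and sel :: "'f \<Rightarrow> nat \<Rightarrow> bool" and c :: real
  assumes wd: "weighted_digraph V A w" and ac: "acyclic A"
    and bounded: "\<And>p. is_dipath V A p \<Longrightarrow> length p \<le> N" and F: "finite F" "F \<noteq> {}"
    and sep: "\<And>i j. i < j \<Longrightarrow> j < N \<Longrightarrow> c * card F \<le> card {f\<in>F. sel f i \<and> \<not> sel f j}"
  shows "c * total_weight A w \<le> mac V A w"
proof (rule mac_ge_by_averaging[OF wd F, where X = "\<lambda>f. {v\<in>V. sel f (height V A v - 1)}"])
  fix u v assume arc: "(u, v) \<in> A"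
  then have "u \<in> V" "v \<in> V" using wd unfolding weighted_digraph_def by auto
  moreover have "height V A u - 1 < height V A v - 1" "height V A v - 1 < N"
    using height_less_arc[OF wd ac bounded arc] height_bounds[of V A N, OF bounded \<open>u \<in> V\<close>]
      height_bounds[of V A N, OF bounded \<open>v \<in> V\<close>]
    by linarith+
  ultimately show "c * card F \<le> card {f\<in>F. u \<in> {v\<in>V. sel f (height V A v - 1)}
      \<and> v \<notin> {v\<in>V. sel f (height V A v - 1)}}"
    using sep by simp
qed auto

lemma le_c_const:
  fixes c :: real
  assumes \<nu>: "\<nu> \<ge> 2" and "c \<ge> 0"
    and lower: "\<And>V A w. weighted_digraph V A w \<Longrightarrow> acyclic A \<Longrightarrow> longest_path_has V A \<nu>
       \<Longrightarrow> c * total_weight A w \<le> mac V A w"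
  shows "c \<le> c_const \<nu>"
proof -
  let ?S = "{c. c \<ge> 0 \<and> (\<forall>V A w. weighted_digraph V A w \<and> acyclic A
      \<and> longest_path_has V A \<nu> \<longrightarrow> mac V A w \<ge> c * total_weight A w)}"
  have "c \<in> ?S" using \<open>c \<ge> 0\<close> lower by blast
  txt \<open>Admissible constants are at most 1: take a path on nu vertices with one arc of weight 1.\<close>
  define V where "V = {..<\<nu>}"
  define A where "A = {(i, Suc i) | i. Suc i < \<nu>}"
  define w :: "nat \<times> nat \<Rightarrow> real" where "w a = (if a = (0,1) then 1 else 0)" for a
  have wd: "weighted_digraph V A w" unfolding weighted_digraph_def V_def A_def w_def by auto
  have "finite A" using wd unfolding weighted_digraph_def by (meson finite_SigmaI finite_subset)
  then have tw: "total_weight A w = 1"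
    unfolding total_weight_def w_def using \<nu> by (simp add: sum.delta A_def)
  have "(x, y) \<in> A\<^sup>+ \<Longrightarrow> x < y" for x y
    by (induction rule: trancl.induct) (auto simp: A_def)
  then have ac: "acyclic A" unfolding acyclic_def by blast
  have lp: "longest_path_has V A \<nu>"
    unfolding longest_path_has_def
  proof (intro conjI allI impI)
    show "\<exists>p. is_dipath V A p \<and> length p = \<nu>"
      using \<nu> by (intro exI[of _ "[0..<\<nu>]"]) (auto simp: is_dipath_def V_def A_def)
    fix p assume "is_dipath V A p"
    then have "distinct p" "set p \<subseteq> {..<\<nu>}" unfolding is_dipath_def V_def by auto
    then show "length p \<le> \<nu>" using card_mono[of "{..<\<nu>}" "set p"] distinct_card[of p] by auto
  qed
  have "bdd_above ?S"
  proof (rule bdd_aboveI[of _ 1])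
    fix x assume "x \<in> ?S"
    then have "x * total_weight A w \<le> mac V A w" using wd ac lp by blast
    then show "x \<le> 1" using mac_le_total_weight[OF wd] tw by simp
  qed
  then show ?thesis unfolding c_const_def using cSup_upper[OF \<open>c \<in> ?S\<close>] by blast
qed

lemma card_subsets_containing:
  assumes B: "finite B" "i \<in> B"
  shows "card {S. S \<subseteq> B \<and> card S = r \<and> i \<in> S} * card B = (card B choose r) * r"
proof (cases "r = 0")
  case True
  have "{S. S \<subseteq> B \<and> card S = r \<and> i \<in> S} = {}"
    using True B(1) by (auto dest: finite_subset)
  then show ?thesis using True by (metis card.empty mult_0 mult_0_right)
next
  case False
  let ?D = "B - {i}"
  have "{S. S \<subseteq> B \<and> card S = r \<and> i \<in> S} = insert i ` {S. S \<subseteq> ?D \<and> card S = r - 1}"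
  proof (intro set_eqI iffI)
    fix S assume S: "S \<in> {S. S \<subseteq> B \<and> card S = r \<and> i \<in> S}"
    then have "S = insert i (S - {i})" "S - {i} \<subseteq> ?D" "card (S - {i}) = r - 1" by auto
    then show "S \<in> insert i ` {S. S \<subseteq> ?D \<and> card S = r - 1}" by blast
  next
    fix S assume "S \<in> insert i ` {S. S \<subseteq> ?D \<and> card S = r - 1}"
    then obtain S' where S': "S' \<subseteq> ?D" "card S' = r - 1" "S = insert i S'" by auto
    have "finite S'" "i \<notin> S'" using S'(1) B(1) finite_subset by auto
    then have "card S = r" using S'(2,3) False by simp
    then show "S \<in> {S. S \<subseteq> B \<and> card S = r \<and> i \<in> S}" using S' B(2) by auto
  qed
  moreover have "inj_on (insert i) {S. S \<subseteq> ?D \<and> card S = r - 1}"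
    by (rule inj_onI) (metis Diff_insert_absorb Diff_iff insertI1 mem_Collect_eq subsetD)
  ultimately have "card {S. S \<subseteq> B \<and> card S = r \<and> i \<in> S} = (card B - 1) choose (r - 1)"
    using n_subsets[of ?D] B by (simp add: card_image)
  then show ?thesis using times_binomial_minus1_eq[of r "card B"] False by (simp add: mult.commute)
qed

lemma card_subsets_avoiding:
  assumes B: "finite B" "j \<in> B"
  shows "card {S. S \<subseteq> B \<and> card S = r \<and> j \<notin> S} * card B = (card B choose r) * (card B - r)"
proof -
  have "{S. S \<subseteq> B \<and> card S = r \<and> j \<notin> S} = {S. S \<subseteq> B - {j} \<and> card S = r}" by auto
  then have "card {S. S \<subseteq> B \<and> card S = r \<and> j \<notin> S} = (card B - 1) choose r"
    using n_subsets[of "B - {j}" r] B by simp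
  then show ?thesis using binomial_absorb_comp[of "card B" r] by (simp add: mult.commute)
qed

lemma card_subsets_separating:
  assumes B: "finite B" "i \<in> B" "j \<in> B" "i \<noteq> j"
  shows "card {S. S \<subseteq> B \<and> card S = r \<and> i \<in> S \<and> j \<notin> S} * (card B * (card B - 1))
    = (card B choose r) * (r * (card B - r))"
proof -
  have "{S. S \<subseteq> B \<and> card S = r \<and> i \<in> S \<and> j \<notin> S} = {S. S \<subseteq> B - {j} \<and> card S = r \<and> i \<in> S}"
    by auto
  moreover have "card (B - {j}) = card B - 1" using B by simp
  ultimately have "card {S. S \<subseteq> B \<and> card S = r \<and> i \<in> S \<and> j \<notin> S} * (card B - 1)
      = ((card B - 1) choose r) * r"
    using card_subsets_containing[of "B - {j}" i r] B by simp
  then show ?thesis using binomial_absorb_comp[of "card B" r]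
    by (metis (no_types, lifting) mult.assoc mult.commute)
qed

lemma mult_le_by_ratio:
  fixes x y p q c :: real
  assumes "x * p = y * q" "0 < p" "c * p \<le> q" "0 \<le> y"
  shows "c * y \<le> x"
proof -
  have "(c * y) * p \<le> x * p" using mult_left_mono[OF assms(3,4)] assms(1) by (simp add: mult_ac)
  then show ?thesis using assms(2) by simp
qed

lemma card_PiE_fun_upd:
  assumes "finite I" "t \<in> I"
  shows "card (PiE I (C(t := D))) * card (C t) = card (PiE I C) * card D"
proof -
  have "(\<Prod>x\<in>I - {t}. card ((C(t := D)) x)) = (\<Prod>x\<in>I - {t}. card (C x))"
    by (rule prod.cong) auto
  then show ?thesis using assms by (simp add: card_PiE prod.remove)
qed

definition block_start :: "(nat \<Rightarrow> nat) \<Rightarrow> nat \<Rightarrow> nat" where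
  "block_start bs t = (\<Sum>u<t. bs u)"

definition block :: "(nat \<Rightarrow> nat) \<Rightarrow> nat \<Rightarrow> nat set" where
  "block bs t = {block_start bs t..<block_start bs (Suc t)}"

definition block_of :: "(nat \<Rightarrow> nat) \<Rightarrow> nat \<Rightarrow> nat" where
  "block_of bs x = (LEAST t. x < block_start bs (Suc t))"

lemma card_block: "card (block bs t) = bs t"
  by (simp add: block_def block_start_def)

lemma in_block_of:
  assumes "x < block_start bs T"
  shows "block_of bs x < T" "x \<in> block bs (block_of bs x)"
proof -
  have "0 < T" using assms by (cases T) (auto simp: block_start_def)
  then have T: "x < block_start bs (Suc (T - 1))" using assms by simp
  have upper: "x < block_start bs (Suc (block_of bs x))"
    unfolding block_of_def by (rule LeastI[of _ "T - 1"]) (rule T)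
  have "block_of bs x \<le> T - 1" unfolding block_of_def by (rule Least_le) (rule T)
  then show "block_of bs x < T" using \<open>0 < T\<close> by linarith
  have "block_start bs (block_of bs x) \<le> x"
  proof (cases "block_of bs x")
    case (Suc t)
    then have "t < (LEAST t. x < block_start bs (Suc t))" unfolding block_of_def by simp
    then have "\<not> x < block_start bs (Suc t)" by (rule not_less_Least)
    then show ?thesis using Suc by simp
  qed (simp add: block_start_def)
  with upper show "x \<in> block bs (block_of bs x)" by (simp add: block_def)
qed

lemma block_of_mono:
  assumes "i \<le> j" "j < block_start bs T"
  shows "block_of bs i \<le> block_of bs j"
proof -
  have "i < block_start bs (Suc (block_of bs j))"
    using in_block_of(2)[OF assms(2)] assms(1) by (simp add: block_def)
  then show ?thesis unfolding block_of_def by (rule Least_le)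
qed

definition block_subsets :: "(nat \<Rightarrow> nat) \<Rightarrow> (nat \<Rightarrow> nat) \<Rightarrow> nat \<Rightarrow> nat set set" where
  "block_subsets bs r t = {S. S \<subseteq> block bs t \<and> card S = r t}"

lemma finite_block: "finite (block bs t)"
  by (simp add: block_def)

lemma card_block_subsets: "card (block_subsets bs r t) = bs t choose r t"
  unfolding block_subsets_def using n_subsets[OF finite_block] by (simp add: card_block)

context
  fixes bs r :: "nat \<Rightarrow> nat" and T :: nat and F :: "(nat \<Rightarrow> nat set) set"
  defines "F \<equiv> PiE {..<T} (block_subsets bs r)"
  assumes r_le: "\<And>t. t < T \<Longrightarrow> r t \<le> bs t"
begin

private lemma card_block_subsets_pos: "t < T \<Longrightarrow> 0 < card (block_subsets bs r t)"
  unfolding card_block_subsets using r_le by simp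

private lemma card_block_choices_pos: "0 < card F"
proof -
  have "card F = (\<Prod>t<T. card (block_subsets bs r t))"
    unfolding F_def by (rule card_PiE) simp
  then show ?thesis using card_block_subsets_pos by (simp add: prod_pos)
qed

lemma finite_block_choices: "finite F" and block_choices_nonempty: "F \<noteq> {}"
  using card_block_choices_pos card_gt_0_iff by blast+

lemma card_block_choices_same_block:
  assumes t: "t < T" and ij: "i \<in> block bs t" "j \<in> block bs t" "i \<noteq> j"
  shows "real (card {f\<in>F. i \<in> f t \<and> j \<notin> f t}) * (real (bs t) * (real (bs t) - 1))
    = real (card F) * (real (r t) * (real (bs t) - real (r t)))"
proof -
  define D where "D = {S \<in> block_subsets bs r t. i \<in> S \<and> j \<notin> S}"
  define E where "E = {f\<in>F. i \<in> f t \<and> j \<notin> f t}"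
  have "E = PiE {..<T} ((block_subsets bs r)(t := D))"
  proof (rule set_eqI)
    show "f \<in> E \<longleftrightarrow> f \<in> PiE {..<T} ((block_subsets bs r)(t := D))" for f
      unfolding E_def F_def D_def PiE_iff mem_Collect_eq fun_upd_apply using t by auto
  qed
  then have E: "card E * card (block_subsets bs r t) = card F * card D"
    unfolding F_def using card_PiE_fun_upd[of "{..<T}" t] t by simp
  have D: "card D * (bs t * (bs t - 1)) = card (block_subsets bs r t) * (r t * (bs t - r t))"
    using card_subsets_separating[OF finite_block ij, of "r t"]
    unfolding card_block_subsets unfolding D_def block_subsets_def by (simp add: card_block conj_assoc)
  have "card E * (bs t * (bs t - 1)) * card (block_subsets bs r t)
      = (card E * card (block_subsets bs r t)) * (bs t * (bs t - 1))"
    by (simp only: ac_simps)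
  also have "\<dots> = card F * (card D * (bs t * (bs t - 1)))"
    unfolding E by (simp only: ac_simps)
  also have "\<dots> = card F * (r t * (bs t - r t)) * card (block_subsets bs r t)"
    unfolding D by (simp only: ac_simps)
  finally have "card E * (bs t * (bs t - 1)) = card F * (r t * (bs t - r t))"
    using card_block_subsets_pos[OF t] by simp
  then have "real (card E * (bs t * (bs t - 1))) = real (card F * (r t * (bs t - r t)))"
    by (rule arg_cong)
  moreover have "1 \<le> bs t" "r t \<le> bs t"
    using card_gt_0_iff[of "block bs t"] ij(1) finite_block card_block[of bs t] r_le[OF t] by auto
  ultimately show ?thesis unfolding E_def by (simp only: of_nat_mult of_nat_diff of_nat_1)
qed

lemma card_block_choices_distinct_blocks:
  assumes tu: "t < T" "u < T" "t \<noteq> u" and ij: "i \<in> block bs t" "j \<in> block bs u"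
  shows "real (card {f\<in>F. i \<in> f t \<and> j \<notin> f u}) * (real (bs t) * real (bs u))
    = real (card F) * (real (r t) * (real (bs u) - real (r u)))"
proof -
  define Ct where "Ct = card (block_subsets bs r t)"
  define Cu where "Cu = card (block_subsets bs r u)"
  define D1 where "D1 = {S \<in> block_subsets bs r t. i \<in> S}"
  define D2 where "D2 = {S \<in> block_subsets bs r u. j \<notin> S}"
  define P where "P = PiE {..<T} ((block_subsets bs r)(t := D1))"
  define E where "E = {f\<in>F. i \<in> f t \<and> j \<notin> f u}"
  have "E = PiE {..<T} ((block_subsets bs r)(t := D1, u := D2))"
  proof (rule set_eqI)
    show "f \<in> E \<longleftrightarrow> f \<in> PiE {..<T} ((block_subsets bs r)(t := D1, u := D2))" for f
      unfolding E_def F_def D1_def D2_def PiE_iff mem_Collect_eq fun_upd_apply using tu by auto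
  qed
  then have E: "card E * Cu = card P * card D2"
    unfolding P_def Cu_def using card_PiE_fun_upd[of "{..<T}" u "(block_subsets bs r)(t := D1)"] tu
    by simp
  have P: "card P * Ct = card F * card D1"
    unfolding P_def F_def Ct_def using card_PiE_fun_upd[of "{..<T}" t] tu by simp
  have D1: "card D1 * bs t = Ct * r t"
    using card_subsets_containing[OF finite_block ij(1), of "r t"]
    unfolding Ct_def card_block_subsets unfolding D1_def block_subsets_def by (simp add: card_block conj_assoc)
  have D2: "card D2 * bs u = Cu * (bs u - r u)"
    using card_subsets_avoiding[OF finite_block ij(2), of "r u"]
    unfolding Cu_def card_block_subsets unfolding D2_def block_subsets_def by (simp add: card_block conj_assoc)
  have "card E * (bs t * bs u) * (Ct * Cu) = (card E * Cu) * bs u * Ct * bs t"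
    by (simp only: ac_simps)
  also have "\<dots> = (card P * Ct) * (card D2 * bs u) * bs t"
    unfolding E by (simp only: ac_simps)
  also have "\<dots> = card F * (card D1 * bs t) * Cu * (bs u - r u)"
    unfolding P D2 by (simp only: ac_simps)
  also have "\<dots> = card F * (r t * (bs u - r u)) * (Ct * Cu)"
    unfolding D1 by (simp only: ac_simps)
  finally have "card E * (bs t * bs u) = card F * (r t * (bs u - r u))"
    using card_block_subsets_pos[OF tu(1)] card_block_subsets_pos[OF tu(2)]
    unfolding Ct_def Cu_def by simp
  then have "real (card E * (bs t * bs u)) = real (card F * (r t * (bs u - r u)))"
    by (rule arg_cong)
  moreover have "r u \<le> bs u" using r_le tu by simp
  ultimately show ?thesis unfolding E_def by (simp only: of_nat_mult of_nat_diff)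
qed

lemma block_choices_separate:
  fixes c :: real
  assumes within: "\<And>t. t < T \<Longrightarrow>
      c * (real (bs t) * (real (bs t) - 1)) \<le> real (r t) * (real (bs t) - real (r t))"
    and across: "\<And>t u. t < u \<Longrightarrow> u < T \<Longrightarrow>
      c * (real (bs t) * real (bs u)) \<le> real (r t) * (real (bs u) - real (r u))"
    and ij: "i < j" "j < block_start bs T"
  shows "c * card F \<le> card {f\<in>F. i \<in> f (block_of bs i) \<and> j \<notin> f (block_of bs j)}"
proof -
  define t where "t = block_of bs i"
  define u where "u = block_of bs j"
  have "t \<le> u" unfolding t_def u_def using block_of_mono ij by simp
  have t: "t < T" "i \<in> block bs t" using in_block_of[of i bs T] ij unfolding t_def by auto
  have u: "u < T" "j \<in> block bs u" using in_block_of[OF ij(2)] unfolding u_def by auto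
  have "0 < bs t" "0 < bs u"
    using card_gt_0_iff[of "block bs t"] card_gt_0_iff[of "block bs u"] finite_block t(2) u(2)
      card_block[of bs t] card_block[of bs u] by auto
  show ?thesis
  proof (cases "t = u")
    case True
    have "card {i, j} \<le> bs t"
      using card_mono[OF finite_block, of "{i, j}" bs t] t(2) u(2) True card_block[of bs t] by auto
    then have pos: "0 < real (bs t) * (real (bs t) - 1)" using ij(1) by simp
    have "i \<noteq> j" using ij(1) by simp
    note count = card_block_choices_same_block[OF t u(2)[folded True] this]
    have "c * card F \<le> card {f\<in>F. i \<in> f t \<and> j \<notin> f t}"
      by (rule mult_le_by_ratio[OF count pos within[OF t(1)]]) simp
    then show ?thesis using True unfolding t_def u_def by simp
  next
    case False
    then have pos: "0 < real (bs t) * real (bs u)" using \<open>0 < bs t\<close> \<open>0 < bs u\<close> by simp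
    have "t < u" using \<open>t \<le> u\<close> False by simp
    note count = card_block_choices_distinct_blocks[OF t(1) u(1) False t(2) u(2)]
    have "c * card F \<le> card {f\<in>F. i \<in> f t \<and> j \<notin> f u}"
      by (rule mult_le_by_ratio[OF count pos across[OF \<open>t < u\<close> u(1)]]) simp
    then show ?thesis unfolding t_def u_def by simp
  qed
qed

end

lemma ratio_mult_le_quarter:
  fixes K X Y :: real
  assumes "1 < 2*K" "2*K*X \<le> (2*K - 1)*Y"
  shows "K / (2*(2*K - 1)) * X \<le> Y / 4"
  using assms by (simp add: field_simps)

lemma outer_block_within_bound:
  fixes K x b e :: real
  assumes b: "b = 2*K - 2*x^2 - e" and e: "0 \<le> e" "e \<le> 1" and x: "1 \<le> x" and xK: "2*x^2 \<le> K"
  shows "K / (2*(2*K - 1)) * (b * (b - 1)) \<le> (b + x) * (b - x) / 4"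
proof (rule ratio_mult_le_quarter)
  have "1 \<le> x^2" using x by (simp add: one_le_power)
  then show "1 < 2*K" using xK by linarith
  have "e^2 \<le> 1" using e by (simp add: power_le_one)
  then have "e^2 \<le> x^2" using \<open>1 \<le> x^2\<close> by linarith
  moreover have "0 \<le> x^2 * (K - 2*x^2)" "0 \<le> e * (2*K - 4*x^2)" using xK e by simp_all
  moreover have "(2*K - 1) * ((b + x) * (b - x)) - 2*K * (b * (b - 1))
      = 2 * (x^2 * (K - 2*x^2)) + e * (2*K - 4*x^2) + (x^2 - e^2)"
    unfolding b by (simp add: algebra_simps power2_eq_square)
  ultimately show "2*K * (b * (b - 1)) \<le> (2*K - 1) * ((b + x) * (b - x))" by linarith
qed

lemma outer_middle_bound:
  fixes K x b :: real
  assumes "b \<le> 2*K - 1" "1 \<le> x" "0 \<le> b" "1 \<le> K"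
  shows "K / (2*(2*K - 1)) * (b * (2*K)) \<le> (b + x) / 2 * K"
proof -
  have "K / (2*(2*K - 1)) * (b * (2*K)) \<le> ((b + x) * (2*K)) / 4"
  proof (rule ratio_mult_le_quarter)
    show "1 < 2*K" using assms by simp
    have "b * (2*K) \<le> (b + x) * (2*K - 1)"
      using mult_left_mono[OF assms(2), of "2*K - 1"] assms by (simp add: algebra_simps)
    from mult_left_mono[OF this, of "2*K"] show "2*K * (b * (2*K)) \<le> (2*K - 1) * ((b + x) * (2*K))"
      using assms by (simp add: algebra_simps)
  qed
  then show ?thesis by (simp add: mult.commute)
qed

lemma outer_same_side_bound:
  fixes K i j bi bj ei ej :: real
  assumes bi: "bi = 2*K - 2*i^2 - ei" and bj: "bj = 2*K - 2*j^2 - ej"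
    and e: "0 \<le> ei" "ei \<le> 1" "0 \<le> ej" "ej \<le> 1"
    and j: "1 \<le> j" and ij: "j + 1 \<le> i" and b0: "0 \<le> bi" "0 \<le> bj"
  shows "K / (2*(2*K - 1)) * (bi * bj) \<le> (bi + i) * (bj - j) / 4"
proof (rule ratio_mult_le_quarter)
  have "2 * 2 \<le> i * i" using j ij by (intro mult_mono) auto
  then have "4 \<le> i^2" by (simp add: power2_eq_square)
  then have bi_le: "bi \<le> 2*K - 1" using bi e by linarith
  show "1 < 2*K" using \<open>4 \<le> i^2\<close> bi e b0 by linarith
  have "i + j \<le> i^2 - j^2"
    using mult_right_mono[of 1 "i - j" "i + j"] ij j by (simp add: algebra_simps power2_eq_square)
  then have gap: "0 \<le> bj - bi - i" using bi bj e j ij by linarith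
  have "bj \<le> i * bj - j * bi - i * j"
  proof -
    have "0 \<le> (i - j - 1) * bj" "0 \<le> j * (bj - bi - i)" using ij b0 gap j by simp_all
    moreover have "i * bj - j * bi - i * j - bj = (i - j - 1) * bj + j * (bj - bi - i)"
      by (simp add: algebra_simps)
    ultimately show ?thesis by linarith
  qed
  then have "(2*K - 1) * bj \<le> (2*K - 1) * (i * bj - j * bi - i * j)"
    using bi_le b0 by (intro mult_left_mono) auto
  moreover have "bi * bj \<le> (2*K - 1) * bj" using bi_le b0 by (simp add: mult_right_mono)
  moreover have "(2*K - 1) * ((bi + i) * (bj - j)) = (2*K - 1) * (bi * bj) + (2*K - 1) * (i * bj - j * bi - i * j)"
    by (simp add: algebra_simps)
  ultimately show "2*K * (bi * bj) \<le> (2*K - 1) * ((bi + i) * (bj - j))"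
    by (simp add: algebra_simps)
qed

lemma outer_opposite_sides_bound:
  fixes K x y bi bj :: real
  assumes "bi \<le> 2*K - 1" "1 \<le> x" "0 \<le> bi" "0 \<le> bj" "0 \<le> y" "1 \<le> K"
  shows "K / (2*(2*K - 1)) * (bi * bj) \<le> (bi + x) * (bj + y) / 4"
proof (rule ratio_mult_le_quarter)
  show "1 < 2*K" using assms by simp
  have "bi * (2*K) \<le> (bi + x) * (2*K - 1)"
    using mult_left_mono[OF assms(2), of "2*K - 1"] assms by (simp add: algebra_simps)
  moreover have "bj \<le> bj + y" "0 \<le> (bi + x) * (2*K - 1)" using assms by simp_all
  ultimately have "bi * (2*K) * bj \<le> (bi + x) * (2*K - 1) * (bj + y)"
    using mult_mono assms(4) by blast
  then show "2*K * (bi * bj) \<le> (2*K - 1) * ((bi + x) * (bj + y))" by (simp add: algebra_simps)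
qed

definition outer_size :: "nat \<Rightarrow> nat \<Rightarrow> nat" where
  "outer_size k i = 2*k - 2*i^2 - i mod 2"

context
  fixes k i :: nat
  assumes i: "1 \<le> i" and i_small: "2*i^2 \<le> k"
begin

private lemma outer_size_bounds: "2*i^2 + i mod 2 + 1 \<le> 2*k" "i \<le> i^2"
proof -
  show "i \<le> i^2" using i by (simp add: power2_eq_square)
  then show "2*i^2 + i mod 2 + 1 \<le> 2*k" using i i_small by linarith
qed

lemma real_outer_size: "real (outer_size k i) = 2*real k - 2*(real i)^2 - real (i mod 2)"
  unfolding outer_size_def using outer_size_bounds by (simp add: of_nat_diff)

lemma outer_size_ge: "k - 1 \<le> outer_size k i" "i \<le> outer_size k i"
  unfolding outer_size_def using outer_size_bounds i_small by auto

lemma real_outer_size_le: "real (outer_size k i) \<le> 2*real k - 1"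
proof -
  have "1 \<le> (real i)^2" using i by (simp add: one_le_power)
  then show ?thesis unfolding real_outer_size by linarith
qed

lemma real_outer_halves:
  "real ((outer_size k i + i) div 2) = (real (outer_size k i) + real i) / 2"
  "real ((outer_size k i - i) div 2) = (real (outer_size k i) - real i) / 2"
proof -
  have "even (2*k - 2*a - i mod 2 + i)" if "2*a + 1 \<le> 2*k" for a
    using that by presburger
  moreover have "even (2*k - 2*a - i mod 2 - i)" if "2*a + 1 \<le> 2*k" "i \<le> 2*k - 2*a - i mod 2" for a
    using that by presburger
  ultimately have "even (outer_size k i + i)" "even (outer_size k i - i)"
    using outer_size_bounds(1) outer_size_ge(2) unfolding outer_size_def by simp_all
  then show "real ((outer_size k i + i) div 2) = (real (outer_size k i) + real i) / 2"
    "real ((outer_size k i - i) div 2) = (real (outer_size k i) - real i) / 2"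
    using outer_size_ge(2) by (auto simp: real_of_nat_div of_nat_diff)
qed

end

abbreviation sep_ratio :: "nat \<Rightarrow> real" where
  "sep_ratio k \<equiv> real k / (2 * (2 * real k - 1))"

lemma real_two_sq_le:
  "2*i^2 \<le> k \<Longrightarrow> 2*(real i)^2 \<le> real k"
  by (metis of_nat_le_iff of_nat_mult of_nat_numeral of_nat_power)

lemma sep_within_outer_block:
  assumes "1 \<le> i" "2*i^2 \<le> k"
  defines "b \<equiv> outer_size k i"
  shows "sep_ratio k * (real b * (real b - 1)) \<le> real ((b + i) div 2) * (real b - real ((b + i) div 2))"
    "sep_ratio k * (real b * (real b - 1)) \<le> real ((b - i) div 2) * (real b - real ((b - i) div 2))"
proof -
  have "sep_ratio k * (real b * (real b - 1)) \<le> (real b + i) * (real b - i) / 4"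
    unfolding b_def using assms(1) real_two_sq_le[OF assms(2)]
    by (intro outer_block_within_bound[OF real_outer_size[OF assms(1,2)]]) auto
  then show "sep_ratio k * (real b * (real b - 1)) \<le> real ((b + i) div 2) * (real b - real ((b + i) div 2))"
    "sep_ratio k * (real b * (real b - 1)) \<le> real ((b - i) div 2) * (real b - real ((b - i) div 2))"
    unfolding b_def real_outer_halves[OF assms(1,2)] by (simp_all add: field_simps)
qed

lemma sep_within_middle_block:
  assumes "1 \<le> k"
  shows "sep_ratio k * (real (2*k) * (real (2*k) - 1)) \<le> real k * (real (2*k) - real k)"
  using assms by (simp add: field_simps)

lemma sep_left_blocks:
  assumes "1 \<le> j" "j < i" "2*i^2 \<le> k"
  defines "bi \<equiv> outer_size k i" and "bj \<equiv> outer_size k j"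
  shows "sep_ratio k * (real bi * real bj) \<le> real ((bi + i) div 2) * (real bj - real ((bj + j) div 2))"
    "sep_ratio k * (real bj * real bi) \<le> real ((bj - j) div 2) * (real bi - real ((bi - i) div 2))"
proof -
  have "j^2 \<le> i^2" using assms by (simp add: power_mono)
  then have j: "1 \<le> j" "2*j^2 \<le> k" and i: "1 \<le> i" "2*i^2 \<le> k" using assms by linarith+
  have "real (i mod 2) \<le> 1" "real (j mod 2) \<le> 1" by auto
  then have "sep_ratio k * (real bi * real bj) \<le> (real bi + i) * (real bj - j) / 4"
    unfolding bi_def bj_def using assms(1,2)
    by (intro outer_same_side_bound[OF real_outer_size[OF i] real_outer_size[OF j]]) auto
  then show "sep_ratio k * (real bi * real bj) \<le> real ((bi + i) div 2) * (real bj - real ((bj + j) div 2))"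
    "sep_ratio k * (real bj * real bi) \<le> real ((bj - j) div 2) * (real bi - real ((bi - i) div 2))"
    unfolding bi_def bj_def real_outer_halves[OF i] real_outer_halves[OF j]
    by (simp_all add: field_simps)
qed

lemma sep_outer_middle:
  assumes "1 \<le> i" "2*i^2 \<le> k"
  defines "b \<equiv> outer_size k i"
  shows "sep_ratio k * (real b * real (2*k)) \<le> real ((b + i) div 2) * (real (2*k) - real k)"
    "sep_ratio k * (real (2*k) * real b) \<le> real k * (real b - real ((b - i) div 2))"
proof -
  have "sep_ratio k * (real b * (2*real k)) \<le> (real b + i) / 2 * real k"
    unfolding b_def using assms(1) real_outer_size_le[OF assms(1,2)] real_two_sq_le[OF assms(2)]
    by (intro outer_middle_bound) (auto simp: one_le_power)
  then show "sep_ratio k * (real b * real (2*k)) \<le> real ((b + i) div 2) * (real (2*k) - real k)"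
    "sep_ratio k * (real (2*k) * real b) \<le> real k * (real b - real ((b - i) div 2))"
    unfolding b_def real_outer_halves[OF assms(1,2)] by (simp_all add: field_simps)
qed

lemma sep_left_right:
  assumes "1 \<le> i" "2*i^2 \<le> k" "1 \<le> j" "2*j^2 \<le> k"
  defines "bi \<equiv> outer_size k i" and "bj \<equiv> outer_size k j"
  shows "sep_ratio k * (real bi * real bj) \<le> real ((bi + i) div 2) * (real bj - real ((bj - j) div 2))"
proof -
  have "sep_ratio k * (real bi * real bj) \<le> (real bi + i) * (real bj + j) / 4"
    unfolding bi_def bj_def using assms(1) real_outer_size_le[OF assms(1,2)] real_two_sq_le[OF assms(2)]
    by (intro outer_opposite_sides_bound) (auto simp: one_le_power)
  then show ?thesis
    unfolding bi_def bj_def real_outer_halves[OF assms(1,2)] real_outer_halves[OF assms(3,4)]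
    by (simp add: field_simps)
qed

definition nstar_size :: "nat \<Rightarrow> nat \<Rightarrow> nat \<Rightarrow> nat" where
  "nstar_size k s t =
    (if t < s then outer_size k (s - t) else if t = s then 2*k else outer_size k (t - s))"

definition nstar_chosen :: "nat \<Rightarrow> nat \<Rightarrow> nat \<Rightarrow> nat" where
  "nstar_chosen k s t =
    (if t < s then (outer_size k (s - t) + (s - t)) div 2 else if t = s then k
     else (outer_size k (t - s) - (t - s)) div 2)"

lemma sq_le_of_le: "i \<le> s \<Longrightarrow> 2*s^2 \<le> k \<Longrightarrow> 2*i^2 \<le> (k::nat)"
  using power_mono[of i s 2] by linarith

context
  fixes k s :: nat
  assumes s: "2*s^2 \<le> k" and k: "1 \<le> k"
begin

lemma nstar_chosen_le_size: "nstar_chosen k s t \<le> nstar_size k s t"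
proof -
  have "i \<le> outer_size k i" if "1 \<le> i" "i \<le> s" for i
    using outer_size_ge(2) that sq_le_of_le[OF that(2) s] by blast
  from this[of "s - t"] have "t < s \<Longrightarrow> (outer_size k (s - t) + (s - t)) div 2 \<le> outer_size k (s - t)"
    by linarith
  then show ?thesis unfolding nstar_chosen_def nstar_size_def by auto
qed

lemma nstar_within:
  assumes "t < 2*s+1"
  shows "sep_ratio k * (real (nstar_size k s t) * (real (nstar_size k s t) - 1))
    \<le> real (nstar_chosen k s t) * (real (nstar_size k s t) - real (nstar_chosen k s t))"
proof -
  consider "t < s" | "t = s" | "s < t" by linarith
  then show ?thesis
  proof cases
    case 1
    then have "1 \<le> s - t" "2*(s-t)^2 \<le> k" using sq_le_of_le[OF _ s, of "s - t"] by auto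
    from sep_within_outer_block(1)[OF this] show ?thesis using 1 unfolding nstar_size_def nstar_chosen_def by simp
  next
    case 2
    then show ?thesis using sep_within_middle_block[OF k] unfolding nstar_size_def nstar_chosen_def by simp
  next
    case 3
    then have "1 \<le> t - s" "2*(t-s)^2 \<le> k" using assms sq_le_of_le[OF _ s, of "t - s"] by auto
    from sep_within_outer_block(2)[OF this] show ?thesis using 3 unfolding nstar_size_def nstar_chosen_def by simp
  qed
qed

lemma nstar_across:
  assumes tu: "t < u" and u: "u < 2*s+1"
  shows "sep_ratio k * (real (nstar_size k s t) * real (nstar_size k s u))
    \<le> real (nstar_chosen k s t) * (real (nstar_size k s u) - real (nstar_chosen k s u))"
proof -
  have small: "2*i^2 \<le> k" if "i \<le> s" for i using sq_le_of_le[OF that s] .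
  consider "u < s" | "t < s" "u = s" | "t < s" "s < u" | "t = s" "s < u" | "s < t" using tu by linarith
  then show ?thesis
  proof cases
    case 1
    then have "1 \<le> s - u" "s - u < s - t" "2*(s-t)^2 \<le> k" using tu small by auto
    from sep_left_blocks(1)[OF this] show ?thesis using 1 tu unfolding nstar_size_def nstar_chosen_def by simp
  next
    case 2
    then have "1 \<le> s - t" "2*(s-t)^2 \<le> k" using small by auto
    from sep_outer_middle(1)[OF this] show ?thesis using 2 unfolding nstar_size_def nstar_chosen_def by simp
  next
    case 3
    then have "1 \<le> s - t" "2*(s-t)^2 \<le> k" "1 \<le> u - s" "2*(u-s)^2 \<le> k" using u small by auto
    from sep_left_right[OF this] show ?thesis using 3 unfolding nstar_size_def nstar_chosen_def by simp
  next
    case 4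
    then have "1 \<le> u - s" "2*(u-s)^2 \<le> k" using u small by auto
    from sep_outer_middle(2)[OF this] show ?thesis using 4 unfolding nstar_size_def nstar_chosen_def by simp
  next
    case 5
    then have "1 \<le> t - s" "t - s < u - s" "2*(u-s)^2 \<le> k" using tu u small by auto
    from sep_left_blocks(2)[OF this] show ?thesis using 5 tu unfolding nstar_size_def nstar_chosen_def by simp
  qed
qed

end

lemma block_start_nstar_size:
  "block_start (nstar_size k s) (2*s+1) = 2*k + 2*(\<Sum>i=1..s. outer_size k i)"
proof -
  have "block_start (nstar_size k s) (2*s+1) = sum (nstar_size k s) {0..<2*s+1}"
    unfolding block_start_def by (simp add: lessThan_atLeast0)
  also have "\<dots> = sum (nstar_size k s) {0..<s} + sum (nstar_size k s) {s..<2*s+1}"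
    by (rule sum.atLeastLessThan_concat[symmetric]) auto
  also have "sum (nstar_size k s) {s..<2*s+1} = 2*k + sum (nstar_size k s) {Suc s..<2*s+1}"
    by (subst sum.atLeast_Suc_lessThan) (auto simp: nstar_size_def)
  also have "sum (nstar_size k s) {0..<s} = (\<Sum>i=1..s. outer_size k i)"
    by (rule sum.reindex_bij_witness[of _ "\<lambda>i. s - i" "\<lambda>t. s - t"]) (auto simp: nstar_size_def)
  also have "sum (nstar_size k s) {Suc s..<2*s+1} = (\<Sum>i=1..s. outer_size k i)"
    by (rule sum.reindex_bij_witness[of _ "\<lambda>i. i + s" "\<lambda>t. t - s"]) (auto simp: nstar_size_def)
  finally show ?thesis by simp
qed

lemma floor_sqrt_half_bounds:
  assumes s: "s = nat \<lfloor>sqrt (real k / 2)\<rfloor>"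
  shows "2*s^2 \<le> k" "k < 2*(s+1)^2"
proof -
  define x where "x = sqrt (real k / 2)"
  have x: "0 \<le> x" "x^2 = real k / 2" unfolding x_def by simp_all
  have "real s = of_int \<lfloor>x\<rfloor>" unfolding s x_def[symmetric] using x by simp
  then have "real s \<le> x" "x < real s + 1" by linarith+
  then have "(real s)^2 \<le> x^2" "x^2 < (real s + 1)^2"
    using x(1) by (simp_all add: power_mono power_strict_mono)
  then have "real (2*s^2) \<le> real k" "real k < real (2*(s+1)^2)" using x(2) by (simp_all add: add.commute)
  then show "2*s^2 \<le> k" "k < 2*(s+1)^2" by (simp_all only: of_nat_le_iff of_nat_less_iff)
qed

lemma nstar_eq_outer_sizes:
  assumes s: "s = nat \<lfloor>sqrt (real k / 2)\<rfloor>"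
  shows "nstar k = 2*k + 2*(\<Sum>i=1..s. outer_size k i)"
proof -
  have "2 * ((2 * int k - 2 * int i ^ 2 - int i) div 2) + int i = int (outer_size k i)"
    if "i \<in> {1..s}" for i
  proof -
    have "2*i^2 \<le> k" using that sq_le_of_le[OF _ floor_sqrt_half_bounds(1)[OF s]] by simp
    moreover have "1 \<le> i^2" using that by simp
    ultimately have "2*i^2 + i mod 2 \<le> 2*k" by linarith
    have parity: "2 * ((2 * a - int i) div 2) + int i = 2 * a - int i mod 2" for a :: int
      by presburger
    have "2 * ((2 * int k - 2 * int i ^ 2 - int i) div 2) + int i
        = 2 * ((2 * (int k - int i ^ 2) - int i) div 2) + int i"
      by (simp only: right_diff_distrib)
    also have "\<dots> = 2 * (int k - int i ^ 2) - int i mod 2" by (rule parity)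
    also have "\<dots> = int (outer_size k i)"
      unfolding outer_size_def using \<open>2*i^2 + i mod 2 \<le> 2*k\<close> by (simp add: of_nat_diff zmod_int)
    finally show ?thesis .
  qed
  then have "(\<Sum>i = 1..s. 2 * ((2 * int k - 2 * int i ^ 2 - int i) div 2) + int i)
      = int (\<Sum>i=1..s. outer_size k i)"
    by (simp add: of_nat_sum)
  moreover have "2 * int k + 2 * int (\<Sum>i=1..s. outer_size k i) = int (2*k + 2*(\<Sum>i=1..s. outer_size k i))"
    by simp
  ultimately show ?thesis unfolding nstar_def s[symmetric] by (simp only: nat_int)
qed

lemma cube_le_square_bound:
  fixes K S N :: real
  assumes K: "3 \<le> K" and S: "K + 1 \<le> 2*S^2" "0 \<le> S" and N: "2*(K-1)*S \<le> N"
  shows "K^3 \<le> N^2"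
proof -
  have "K^3 \<le> 2*(K-1)^2 * (K+1)"
  proof -
    have "K^2 \<le> K^2*(K-2)" "2*K \<le> K^2" using K by (simp_all add: power2_eq_square)
    moreover have "2*(K-1)^2 * (K+1) - K^3 = K^2*(K-2) - 2*K + 2"
      by (simp add: algebra_simps power2_eq_square power3_eq_cube)
    ultimately show ?thesis by linarith
  qed
  also have "\<dots> \<le> 2*(K-1)^2 * (2*S^2)" using S by (intro mult_left_mono) auto
  also have "\<dots> = (2*(K-1)*S)^2" by (simp add: algebra_simps power2_eq_square)
  also have "\<dots> \<le> N^2" using N K S by (intro power_mono) auto
  finally show ?thesis .
qed

lemma cube_le_nstar_square:
  assumes k: "3 \<le> k"
  shows "(real k)^3 \<le> (real (nstar k))^2"
proof -
  define s where "s = nat \<lfloor>sqrt (real k / 2)\<rfloor>"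
  have "k - 1 \<le> outer_size k i" if "i \<in> {1..s}" for i
    using outer_size_ge(1) that sq_le_of_le[OF _ floor_sqrt_half_bounds(1)[OF s_def]] by simp
  then have "s * (k - 1) \<le> (\<Sum>i=1..s. outer_size k i)"
    using sum_bounded_below[of "{1..s}" "k - 1" "outer_size k"] by simp
  then have "real (s * (k - 1)) \<le> real (\<Sum>i=1..s. outer_size k i)"
    by (simp only: of_nat_le_iff)
  then have "real s * (real k - 1) \<le> real (\<Sum>i=1..s. outer_size k i)"
    using k by (simp add: of_nat_diff)
  then have N: "2*(real k - 1)*(real s + 1) \<le> real (nstar k)"
    unfolding nstar_eq_outer_sizes[OF s_def] by (simp add: algebra_simps)
  have "k + 1 \<le> 2*(s+1)^2" using floor_sqrt_half_bounds(2)[OF s_def] by simp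
  then have "real (k + 1) \<le> real (2*(s+1)^2)" by (simp only: of_nat_le_iff)
  then have "real k + 1 \<le> 2*(real s + 1)^2" by (simp add: add.commute)
  then show ?thesis using k N by (intro cube_le_square_bound) auto
qed

lemma le_nstar_powr:
  assumes k: "3 \<le> k"
  shows "real k \<le> real (nstar k) powr (2/3)"
proof -
  have "((real k)^3) powr (1/3) \<le> ((real (nstar k))^2) powr (1/3)"
    using cube_le_nstar_square[OF k] by (intro powr_mono2) auto
  moreover have "((real k)^3) powr (1/3) = real k"
    using k powr_realpow[of "real k" 3] powr_powr[of "real k" 3 "1/3"] by simp
  moreover have "((real (nstar k))^2) powr (1/3) = real (nstar k) powr (2/3)"
    using powr_realpow[of "real (nstar k)" 2] powr_powr[of "real (nstar k)" 2 "1/3"]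
    by (cases "nstar k = 0") simp_all
  ultimately show ?thesis by simp
qed

lemma sep_ratio_le_c_const:
  assumes k: "1 \<le> k"
  shows "sep_ratio k \<le> c_const (nstar k)"
proof (rule le_c_const)
  define s where "s = nat \<lfloor>sqrt (real k / 2)\<rfloor>"
  note s = floor_sqrt_half_bounds(1)[OF s_def]
  define bs r where "bs = nstar_size k s" and "r = nstar_chosen k s"
  define F where "F = PiE {..<2*s+1} (block_subsets bs r)"
  have N: "nstar k = block_start bs (2*s+1)"
    unfolding bs_def block_start_nstar_size nstar_eq_outer_sizes[OF s_def] ..
  then show "2 \<le> nstar k" using k unfolding nstar_eq_outer_sizes[OF s_def] by simp
  show "0 \<le> sep_ratio k" using k by simp
  fix V A w assume wd: "weighted_digraph V A w" and ac: "acyclic A" and lp: "longest_path_has V A (nstar k)"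
  have r_le: "r t \<le> bs t" for t unfolding bs_def r_def using nstar_chosen_le_size[OF s k] .
  have F: "finite F" "F \<noteq> {}"
    using finite_block_choices[where bs = bs and r = r and T = "2*s+1"]
      block_choices_nonempty[where bs = bs and r = r and T = "2*s+1"] r_le
    unfolding F_def by blast+
  note separate = block_choices_separate[where bs = bs and r = r and T = "2*s+1", folded F_def]
  show "sep_ratio k * total_weight A w \<le> mac V A w"
  proof (rule mac_ge_by_level_averaging[OF wd ac _ F, where sel = "\<lambda>f x. x \<in> f (block_of bs x)"])
    show "is_dipath V A p \<Longrightarrow> length p \<le> nstar k" for p
      using lp unfolding longest_path_has_def by blast
  next
    fix i j assume "i < j" "j < nstar k"
    then show "sep_ratio k * card F \<le> card {f\<in>F. i \<in> f (block_of bs i) \<and> j \<notin> f (block_of bs j)}"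
      using separate[OF r_le] nstar_within[OF s k] nstar_across[OF s k] unfolding N bs_def r_def by blast
  qed
qed

theorem mainTheorem14:
  fixes k :: nat
  assumes "k \<ge> 7"
  shows "c_const (nstar k) \<ge> 1/4 + 1 / (8 * real (nstar k) powr (2/3) - 4)"
proof -
  have "1/4 + 1 / (8 * real (nstar k) powr (2/3) - 4) \<le> 1/4 + 1 / (8 * real k - 4)"
    using le_nstar_powr[of k] assms by (intro add_left_mono frac_le) auto
  also have "\<dots> = sep_ratio k"
    using assms by (simp add: field_simps)
  also have "\<dots> \<le> c_const (nstar k)"
    using sep_ratio_le_c_const assms by simp
  finally show ?thesis .
qed

end
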